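(* Consider the truncated variable-rate cooperative incremental-redundancy HARQ protocol described in the context, with maximum number of rounds $K\ge 1$, source redundancies $\rho^{S}_1,\dots,\rho^{S}_K\ge 0$ and relay redundancies $\rho^{R}_{l,k}\ge 0$ for $1\le l<k\le K$. Then the outage probability is $$P_{\mathrm{out}} = p^{SD}_K\, p^{SR}_{K-1} + \sum_{i=1}^{K-1}\big[p^{SR}_{i-1}-p^{SR}_{i}\big]\, p^{SRD}_{i,K},$$ the expected total number of channel uses is $\overline{N}_s = N_b\cdot D$, where $$D=\sum_{i=1}^K \rho^{S}_i\, p^{SD}_{i-1}\, p^{SR}_{i-1} + \sum_{i=1}^{K-1}\big[p^{SR}_{i-1}-p^{SR}_{i}\big]\Big[\sum_{l=i+2}^{K}\rho^{R}_{i,l}\, p^{SRD}_{i,l-1} + \rho^{R}_{i,i+1}\, p^{SD}_{i}\Big],$$ and consequently the throughput is $\eta = \dfrac{N_b(1-P_{\mathrm{out}})}{\overline{N}_s} = \dfrac{1-P_{\mathrm{out}}}{D}$.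
   Context: Three half-duplex nodes: source $S$, relay $R$, destination $D$. A message of $N_b$ bits is to be delivered from $S$ to $D$, in at most $K$ transmission rounds. For links $ab\in\{SR,SD,RD\}$ and rounds $k=1,\dots,K$, the SNRs $\gamma^{ab}_k$ are mutually independent random variables, i.i.d. across rounds for each link, with continuous distributions, and $C^{ab}_k=\log_2(1+\gamma^{ab}_k)$. In round $k$ a transmitter uses $N_b\rho_k$ channel uses (fresh, disjoint parts of one Gaussian codeword), where $\rho_k$ is the redundancy of that round. The normalized mutual information gained in round $k$ is $\iota^{SD}_k=C^{SD}_k\rho^{S}_k$ and $\iota^{SR}_k=C^{SR}_k\rho^{S}_k$ when $S$ transmits, and $\iota^{RD}_{l,k}=C^{RD}_k\rho^{R}_{l,k}$ when $R$ transmits in round $k$ after having decoded in round $l$. A node decodes at the end of a round as soon as its accumulated normalized mutual information is at least $1$; decoding outcomes are fed back error-free (one bit ACK/NACK). Protocol: in the broadcasting phase $S$ transmits in rounds $1,2,\dots$ (both $R$ and $D$ accumulate $\iota^{SR}$ and $\iota^{SD}$) until $D$ or $R$ decodes. If $D$ decodes, transmission ends successfully. If $R$ decodes at the end of round $l<K$ while $D$ has not, the relaying phase starts: $S$ is silent and $R$ transmits in rounds $k=l+1,\dots,K$ with redundancies $\rho^{R}_{l,k}$, $D$ accumulating $\iota^{RD}_{l,k}$ on top of $\sum_{m=1}^l\iota^{SD}_m$, until $D$ decodes. The process stops when $D$ decodes or after round $K$; outage is the event that $D$ has not decoded after round $K$, with probability $P_{\mathrm{out}}$, and $\overline{N}_s$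 is the expected total number of channel uses spent on the message. Define $p^{SD}_k=\Pr\{\sum_{i=1}^k\iota^{SD}_i<1\}$, $p^{SR}_k=\Pr\{\sum_{i=1}^k\iota^{SR}_i<1\}$, with $p^{SD}_0=p^{SR}_0=1$, and for $1\le l<k\le K$, $p^{SRD}_{l,k}=\Pr\{\sum_{i=1}^l\iota^{SD}_i+\sum_{i=l+1}^k\iota^{RD}_{l,i}<1\}$ (with $p^{SRD}_{l,l}=p^{SD}_l$). The throughput is defined (renewal-reward) as $\eta=N_b(1-P_{\mathrm{out}})/\overline{N}_s$. *)

theory Defs
  imports "HOL-Probability.Probability"
begin

datatype link = SR | SD | RD

definition cap :: "real \<Rightarrow> real" where
  "cap g = log 2 (1 + g)"

text \<open>Deterministic description of the protocol, given the per-round capacities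
  c a k (link a, round k), source redundancies rS k and relay redundancies rR l k.\<close>

definition accS :: "(nat \<Rightarrow> real) \<Rightarrow> (nat \<Rightarrow> real) \<Rightarrow> nat \<Rightarrow> real" where
  "accS rS cl k = (\<Sum>i=1..k. cl i * rS i)"

text \<open>Accumulated information at D after round k when R decoded in round l.\<close>
definition accRD :: "(nat \<Rightarrow> real) \<Rightarrow> (nat \<Rightarrow> nat \<Rightarrow> real) \<Rightarrow> (link \<Rightarrow> nat \<Rightarrow> real)
    \<Rightarrow> nat \<Rightarrow> nat \<Rightarrow> real" where
  "accRD rS rR c l k = accS rS (c SD) l + (\<Sum>i=l+1..k. c RD i * rR l i)"

text \<open>S transmits in round k: neither R nor D decoded in rounds before k.\<close>
definition S_tx :: "nat \<Rightarrow> (nat \<Rightarrow> real) \<Rightarrow> (link \<Rightarrow> nat \<Rightarrow> real) \<Rightarrow> nat \<Rightarrow> bool" where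
  "S_tx K rS c k \<longleftrightarrow> 1 \<le> k \<and> k \<le> K \<and>
     (\<forall>m\<in>{1..<k}. accS rS (c SR) m < 1 \<and> accS rS (c SD) m < 1)"

text \<open>The relaying phase starts after round l < K: S transmitted in round l, R decodes
  at the end of round l, D does not.\<close>
definition relay_start :: "nat \<Rightarrow> (nat \<Rightarrow> real) \<Rightarrow> (link \<Rightarrow> nat \<Rightarrow> real) \<Rightarrow> nat \<Rightarrow> bool" where
  "relay_start K rS c l \<longleftrightarrow> l < K \<and> S_tx K rS c l \<and>
     1 \<le> accS rS (c SR) l \<and> accS rS (c SD) l < 1"

text \<open>R transmits in round k after having decoded in round l.\<close>
definition R_tx :: "nat \<Rightarrow> (nat \<Rightarrow> real) \<Rightarrow> (nat \<Rightarrow> nat \<Rightarrow> real) \<Rightarrow> (link \<Rightarrow> nat \<Rightarrow> real)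
    \<Rightarrow> nat \<Rightarrow> nat \<Rightarrow> bool" where
  "R_tx K rS rR c l k \<longleftrightarrow> relay_start K rS c l \<and> l < k \<and> k \<le> K \<and>
     (\<forall>m\<in>{l<..<k}. accRD rS rR c l m < 1)"

text \<open>D decodes at the end of some round in which a transmission took place.\<close>
definition success :: "nat \<Rightarrow> (nat \<Rightarrow> real) \<Rightarrow> (nat \<Rightarrow> nat \<Rightarrow> real) \<Rightarrow> (link \<Rightarrow> nat \<Rightarrow> real) \<Rightarrow> bool" where
  "success K rS rR c \<longleftrightarrow>
     (\<exists>k. S_tx K rS c k \<and> 1 \<le> accS rS (c SD) k) \<or>
     (\<exists>l k. R_tx K rS rR c l k \<and> 1 \<le> accRD rS rR c l k)"

definition chan_uses :: "nat \<Rightarrow> nat \<Rightarrow> (nat \<Rightarrow> real) \<Rightarrow> (nat \<Rightarrow> nat \<Rightarrow> real) \<Rightarrow> (link \<Rightarrow> nat \<Rightarrow> real) \<Rightarrow> real" where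
  "chan_uses Nb K rS rR c = real Nb *
     ((\<Sum>k=1..K. if S_tx K rS c k then rS k else 0) +
      (\<Sum>l=1..K. \<Sum>k=1..K. if R_tx K rS rR c l k then rR l k else 0))"

definition caps :: "(link \<Rightarrow> nat \<Rightarrow> 'a \<Rightarrow> real) \<Rightarrow> 'a \<Rightarrow> link \<Rightarrow> nat \<Rightarrow> real" where
  "caps g w = (\<lambda>a k. cap (g a k w))"

definition P_out :: "'a measure \<Rightarrow> (link \<Rightarrow> nat \<Rightarrow> 'a \<Rightarrow> real) \<Rightarrow> nat \<Rightarrow> (nat \<Rightarrow> real)
    \<Rightarrow> (nat \<Rightarrow> nat \<Rightarrow> real) \<Rightarrow> real" where
  "P_out M g K rS rR = measure M {w\<in>space M. \<not> success K rS rR (caps g w)}"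

definition N_s_bar :: "'a measure \<Rightarrow> (link \<Rightarrow> nat \<Rightarrow> 'a \<Rightarrow> real) \<Rightarrow> nat \<Rightarrow> nat \<Rightarrow> (nat \<Rightarrow> real)
    \<Rightarrow> (nat \<Rightarrow> nat \<Rightarrow> real) \<Rightarrow> real" where
  "N_s_bar M g Nb K rS rR = (\<integral>w. chan_uses Nb K rS rR (caps g w) \<partial>M)"

definition throughput :: "'a measure \<Rightarrow> (link \<Rightarrow> nat \<Rightarrow> 'a \<Rightarrow> real) \<Rightarrow> nat \<Rightarrow> nat \<Rightarrow> (nat \<Rightarrow> real)
    \<Rightarrow> (nat \<Rightarrow> nat \<Rightarrow> real) \<Rightarrow> real" where
  "throughput M g Nb K rS rR = real Nb * (1 - P_out M g K rS rR) / N_s_bar M g Nb K rS rR"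

definition pSD :: "'a measure \<Rightarrow> (link \<Rightarrow> nat \<Rightarrow> 'a \<Rightarrow> real) \<Rightarrow> (nat \<Rightarrow> real) \<Rightarrow> nat \<Rightarrow> real" where
  "pSD M g rS k = measure M {w\<in>space M. accS rS (caps g w SD) k < 1}"

definition pSR :: "'a measure \<Rightarrow> (link \<Rightarrow> nat \<Rightarrow> 'a \<Rightarrow> real) \<Rightarrow> (nat \<Rightarrow> real) \<Rightarrow> nat \<Rightarrow> real" where
  "pSR M g rS k = measure M {w\<in>space M. accS rS (caps g w SR) k < 1}"

definition pSRD :: "'a measure \<Rightarrow> (link \<Rightarrow> nat \<Rightarrow> 'a \<Rightarrow> real) \<Rightarrow> (nat \<Rightarrow> real)
    \<Rightarrow> (nat \<Rightarrow> nat \<Rightarrow> real) \<Rightarrow> nat \<Rightarrow> nat \<Rightarrow> real" where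
  "pSRD M g rS rR l k = measure M {w\<in>space M. accRD rS rR (caps g w) l k < 1}"

end

theory Submission
  imports Defs
begin

text \<open>All accumulated informations are nondecreasing in the round number, so a realisation of
  the protocol is determined by the round \<open>i\<close> in which R first decodes. If R does not decode
  before round \<open>K\<close>, D fails iff the information it gathers from S in rounds \<open>1..K\<close> stays
  below 1; if R first decodes in round \<open>i < K\<close>, D fails iff the information gathered from S in
  rounds \<open>1..i\<close> and from R in rounds \<open>i+1..K\<close> stays below 1. These outage events are disjoint,
  and each factorises because the SR link is independent of the SD and RD links. In the same way
  S transmits in round \<open>k\<close> iff neither R nor D has decoded after round \<open>k - 1\<close>, and R transmits
  in round \<open>k\<close> iff it first decoded in some round \<open>l < k\<close> and D has not decoded after round
  \<open>k - 1\<close>; linearity of expectation then gives the mean number of channel uses.\<close>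

lemma exists_crossing_iff:
  fixes f :: "nat \<Rightarrow> 'a::linorder"
  assumes mono: "\<And>i j. m \<le> i \<Longrightarrow> i \<le> j \<Longrightarrow> j \<le> n \<Longrightarrow> f i \<le> f j"
    and "f m < t" and "m \<le> n"
  shows "(\<exists>k\<in>{m<..n}. f (k - 1) < t \<and> t \<le> f k) \<longleftrightarrow> t \<le> f n"
  using \<open>m \<le> n\<close>
proof (induction n rule: dec_induct)
  case base
  then show ?case using \<open>f m < t\<close> by auto
next
  case (step n)
  have "{m<..Suc n} = insert (Suc n) {m<..n}" using step.hyps(1) by auto
  moreover have "f n \<le> f (Suc n)" using mono step.hyps by simp
  ultimately show ?case using step.IH by auto
qed

lemma crossing_unique:
  fixes f :: "nat \<Rightarrow> 'a::linorder"
  assumes mono: "\<And>i j. i \<le> j \<Longrightarrow> j \<le> n \<Longrightarrow> f i \<le> f j"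
    and i: "0 < i" "i \<le> n" "f (i - 1) < t" "t \<le> f i"
    and l: "0 < l" "l \<le> n" "f (l - 1) < t" "t \<le> f l"
  shows "l = i"
proof (rule ccontr)
  assume "l \<noteq> i"
  then consider "l \<le> i - 1" | "i \<le> l - 1" by linarith
  then show False
  proof cases
    case 1
    then have "f l \<le> f (i - 1)" using mono i by simp
    then show False using i l by (meson leD order.trans)
  next
    case 2
    then have "f i \<le> f (l - 1)" using mono l by simp
    then show False using i l by (meson leD order.trans)
  qed
qed

lemma accS_0 [simp]: "accS rS cl 0 = 0"
  by (simp add: accS_def)

lemma accRD_self [simp]: "accRD rS rR c l l = accS rS (c SD) l"
  by (simp add: accRD_def)

lemma pSRD_self [simp]: "pSRD M g rS rR l l = pSD M g rS l"
  by (simp add: pSRD_def pSD_def caps_def)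

locale harq_realisation =
  fixes K :: nat and rS :: "nat \<Rightarrow> real" and rR :: "nat \<Rightarrow> nat \<Rightarrow> real"
    and c :: "link \<Rightarrow> nat \<Rightarrow> real"
  assumes capacity_nonneg: "\<And>a k. k \<in> {1..K} \<Longrightarrow> 0 \<le> c a k"
    and rS_nonneg: "\<And>k. k \<in> {1..K} \<Longrightarrow> 0 \<le> rS k"
    and rR_nonneg: "\<And>l k. 1 \<le> l \<Longrightarrow> l < k \<Longrightarrow> k \<le> K \<Longrightarrow> 0 \<le> rR l k"
begin

abbreviation accR :: "nat \<Rightarrow> real" where "accR \<equiv> accS rS (c SR)"
abbreviation accD :: "nat \<Rightarrow> real" where "accD \<equiv> accS rS (c SD)"

lemma accS_mono: "m \<le> n \<Longrightarrow> n \<le> K \<Longrightarrow> accS rS (c a) m \<le> accS rS (c a) n"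
  unfolding accS_def
  by (rule sum_mono2) (auto intro!: mult_nonneg_nonneg capacity_nonneg rS_nonneg)

lemma accS_less_mono:
  "accS rS (c a) n < t \<Longrightarrow> m \<le> n \<Longrightarrow> n \<le> K \<Longrightarrow> accS rS (c a) m < t"
  using accS_mono[of m n a] by simp

lemma accS_ge_mono:
  "t \<le> accS rS (c a) m \<Longrightarrow> m \<le> n \<Longrightarrow> n \<le> K \<Longrightarrow> t \<le> accS rS (c a) n"
  using accS_mono[of m n a] by simp

lemma accRD_mono:
  "1 \<le> l \<Longrightarrow> l \<le> m \<Longrightarrow> m \<le> n \<Longrightarrow> n \<le> K \<Longrightarrow> accRD rS rR c l m \<le> accRD rS rR c l n"
  unfolding accRD_def
  by (simp, rule sum_mono2) (auto intro!: mult_nonneg_nonneg capacity_nonneg rR_nonneg)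

lemma accD_le_accRD: "1 \<le> l \<Longrightarrow> l \<le> n \<Longrightarrow> n \<le> K \<Longrightarrow> accD l \<le> accRD rS rR c l n"
  using accRD_mono[of l l n] by simp

lemma accR_crossing_unique:
  assumes "0 < i" "i \<le> K" "accR (i - 1) < 1" "1 \<le> accR i"
    and "0 < l" "l \<le> K" "accR (l - 1) < 1" "1 \<le> accR l"
  shows "l = i"
  by (rule crossing_unique[of K accR i 1 l]) (use assms accS_mono in auto)

lemma S_tx_iff: "S_tx K rS c k \<longleftrightarrow> 1 \<le> k \<and> k \<le> K \<and> accR (k - 1) < 1 \<and> accD (k - 1) < 1"
proof
  assume "S_tx K rS c k"
  then have k: "1 \<le> k" "k \<le> K"
    and below: "\<And>m. m \<in> {1..<k} \<Longrightarrow> accR m < 1 \<and> accD m < 1"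
    by (simp_all add: S_tx_def)
  show "1 \<le> k \<and> k \<le> K \<and> accR (k - 1) < 1 \<and> accD (k - 1) < 1"
  proof (cases "k = 1")
    case False
    then show ?thesis using k below[of "k - 1"] by simp
  qed (use k in simp)
next
  assume H: "1 \<le> k \<and> k \<le> K \<and> accR (k - 1) < 1 \<and> accD (k - 1) < 1"
  show "S_tx K rS c k"
    unfolding S_tx_def
  proof (intro conjI ballI)
    fix m assume m: "m \<in> {1..<k}"
    show "accR m < 1" using H m accS_less_mono[of SR "k - 1" 1 m] by auto
    show "accD m < 1" using H m accS_less_mono[of SD "k - 1" 1 m] by auto
  qed (use H in auto)
qed

lemma R_tx_iff:
  "R_tx K rS rR c l k \<longleftrightarrow> 1 \<le> l \<and> l < k \<and> k \<le> K \<and> accR (l - 1) < 1 \<and> 1 \<le> accR l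
     \<and> accRD rS rR c l (k - 1) < 1"
proof
  assume R: "R_tx K rS rR c l k"
  then have "accRD rS rR c l (k - 1) < 1"
    by (cases "k = Suc l") (auto simp: R_tx_def relay_start_def)
  then show "1 \<le> l \<and> l < k \<and> k \<le> K \<and> accR (l - 1) < 1 \<and> 1 \<le> accR l
     \<and> accRD rS rR c l (k - 1) < 1"
    using R by (auto simp: R_tx_def relay_start_def S_tx_iff)
next
  assume H: "1 \<le> l \<and> l < k \<and> k \<le> K \<and> accR (l - 1) < 1 \<and> 1 \<le> accR l
     \<and> accRD rS rR c l (k - 1) < 1"
  have "accD l < 1"
    using H accD_le_accRD[of l "k - 1"] by linarith
  moreover have "accD (l - 1) \<le> accD l"
    using H accS_mono[of "l - 1" l] by simp
  moreover have "accRD rS rR c l m < 1" if "m \<in> {l<..<k}" for m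
  proof -
    have "accRD rS rR c l m \<le> accRD rS rR c l (k - 1)"
      using H that by (intro accRD_mono) auto
    then show ?thesis using H by linarith
  qed
  ultimately show "R_tx K rS rR c l k"
    using H by (auto simp: R_tx_def relay_start_def S_tx_iff)
qed

lemma success_iff_without_relay:
  assumes "accR (K - 1) < 1"
  shows "success K rS rR c \<longleftrightarrow> 1 \<le> accD K"
proof -
  have "\<not> R_tx K rS rR c l k" for l k
  proof
    assume "R_tx K rS rR c l k"
    then have "l \<le> K - 1" "1 \<le> accR l" by (auto simp: R_tx_iff)
    then show False using assms accS_mono[of l "K - 1" SR] by simp
  qed
  moreover have "S_tx K rS c k \<and> 1 \<le> accD k \<longleftrightarrow> k \<in> {0<..K} \<and> accD (k - 1) < 1 \<and> 1 \<le> accD k"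
    for k
    using assms accS_less_mono[of SR "K - 1" 1 "k - 1"] by (auto simp: S_tx_iff)
  moreover have "(\<exists>k\<in>{0<..K}. accD (k - 1) < 1 \<and> 1 \<le> accD k) \<longleftrightarrow> 1 \<le> accD K"
    by (rule exists_crossing_iff) (auto simp: accS_mono)
  ultimately show ?thesis
    unfolding success_def by blast
qed

lemma success_iff_via_relay:
  assumes i: "1 \<le> i" "i < K" "accR (i - 1) < 1" "1 \<le> accR i"
  shows "success K rS rR c \<longleftrightarrow> 1 \<le> accRD rS rR c i K"
proof -
  have S: "S_tx K rS c k \<and> 1 \<le> accD k \<longleftrightarrow> k \<in> {0<..i} \<and> accD (k - 1) < 1 \<and> 1 \<le> accD k" for k
  proof -
    have "k \<le> i" if "k \<le> K" "accR (k - 1) < 1"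
    proof (rule ccontr)
      assume "\<not> k \<le> i"
      then have "i \<le> k - 1" "k - 1 \<le> K" using that by auto
      then have "1 \<le> accR (k - 1)"
        by (rule accS_ge_mono[OF i(4)])
      then show False using that by simp
    qed
    moreover have "accR (k - 1) < 1" if "k \<le> i"
      using i that accS_less_mono[of SR "i - 1" 1 "k - 1"] by simp
    ultimately show ?thesis
      using i by (auto simp: S_tx_iff)
  qed
  have R: "R_tx K rS rR c l k \<longleftrightarrow> l = i \<and> k \<in> {i<..K} \<and> accRD rS rR c i (k - 1) < 1" for l k
  proof
    assume "R_tx K rS rR c l k"
    then have l: "1 \<le> l" "l < k" "k \<le> K" "accR (l - 1) < 1" "1 \<le> accR l"
      "accRD rS rR c l (k - 1) < 1"
      by (simp_all add: R_tx_iff)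
    moreover from this have "l = i"
      using i by (intro accR_crossing_unique) auto
    ultimately show "l = i \<and> k \<in> {i<..K} \<and> accRD rS rR c i (k - 1) < 1" by simp
  qed (use i in \<open>auto simp: R_tx_iff\<close>)
  have direct: "(\<exists>k\<in>{0<..i}. accD (k - 1) < 1 \<and> 1 \<le> accD k) \<longleftrightarrow> 1 \<le> accD i"
    by (rule exists_crossing_iff) (use i in \<open>auto simp: accS_mono\<close>)
  have relayed: "(\<exists>k\<in>{i<..K}. accRD rS rR c i (k - 1) < 1 \<and> 1 \<le> accRD rS rR c i k)
      \<longleftrightarrow> 1 \<le> accRD rS rR c i K" if "accD i < 1"
    by (rule exists_crossing_iff) (use i that in \<open>auto simp: accRD_mono\<close>)
  have "success K rS rR c \<longleftrightarrow> (\<exists>k\<in>{0<..i}. accD (k - 1) < 1 \<and> 1 \<le> accD k) \<or>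
      (\<exists>k\<in>{i<..K}. accRD rS rR c i (k - 1) < 1 \<and> 1 \<le> accRD rS rR c i k)"
    unfolding success_def S R by blast
  moreover have "accD i \<le> accRD rS rR c i K"
    using i by (simp add: accD_le_accRD)
  ultimately show ?thesis
    using direct relayed by (cases "accD i < 1") auto
qed

lemma not_success_iff:
  assumes "1 \<le> K"
  shows "\<not> success K rS rR c \<longleftrightarrow> (accR (K - 1) < 1 \<and> accD K < 1) \<or>
     (\<exists>i\<in>{1..K - 1}. accR (i - 1) < 1 \<and> 1 \<le> accR i \<and> accRD rS rR c i K < 1)"
proof (cases "accR (K - 1) < 1")
  case True
  then have "\<not> 1 \<le> accR i" if "i \<in> {1..K - 1}" for i
    using that accS_mono[of i "K - 1" SR] by auto
  then show ?thesis
    using True success_iff_without_relay by auto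
next
  case False
  then obtain i where i: "0 < i" "i \<le> K - 1" "accR (i - 1) < 1" "1 \<le> accR i"
    using exists_crossing_iff[of 0 "K - 1" accR 1] by (auto simp: accS_mono)
  have "(\<exists>i'\<in>{1..K - 1}. accR (i' - 1) < 1 \<and> 1 \<le> accR i' \<and> accRD rS rR c i' K < 1)
      \<longleftrightarrow> accRD rS rR c i K < 1"
  proof
    assume "\<exists>i'\<in>{1..K - 1}. accR (i' - 1) < 1 \<and> 1 \<le> accR i' \<and> accRD rS rR c i' K < 1"
    then obtain i' where "i' \<in> {1..K - 1}" "accR (i' - 1) < 1" "1 \<le> accR i'"
      "accRD rS rR c i' K < 1" by blast
    moreover from this have "i' = i"
      using i by (intro accR_crossing_unique) auto
    ultimately show "accRD rS rR c i K < 1" by simp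
  qed (use i in auto)
  then show ?thesis
    using False i success_iff_via_relay[of i] by auto
qed

end

lemma cap_nonneg: "0 \<le> x \<Longrightarrow> 0 \<le> cap x"
  by (simp add: cap_def)

lemma cap_measurable [measurable]: "cap \<in> borel_measurable borel"
  unfolding cap_def by measurable

text \<open>\<open>accS\<close> on the SR link and \<open>accRD\<close> as functions of the SNR vectors of the SR link and of
  the SD and RD links respectively; the events below are preimages under these independent
  random vectors.\<close>

definition accS_vec :: "(nat \<Rightarrow> real) \<Rightarrow> nat \<Rightarrow> (link \<times> nat \<Rightarrow> real) \<Rightarrow> real" where
  "accS_vec rS m x = (\<Sum>i=1..m. cap (x (SR, i)) * rS i)"

definition accRD_vec :: "(nat \<Rightarrow> real) \<Rightarrow> (nat \<Rightarrow> nat \<Rightarrow> real) \<Rightarrow> nat \<Rightarrow> nat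
    \<Rightarrow> (link \<times> nat \<Rightarrow> real) \<Rightarrow> real" where
  "accRD_vec rS rR l n y = (\<Sum>i=1..l. cap (y (SD, i)) * rS i) + (\<Sum>i=l+1..n. cap (y (RD, i)) * rR l i)"

lemma cap_component_measurable:
  "(a, i) \<in> S \<times> {1..K} \<Longrightarrow> (\<lambda>x. cap (x (a, i))) \<in> borel_measurable (PiM (S \<times> {1..K}) (\<lambda>_. borel))"
  by (rule measurable_compose[OF _ cap_measurable]) (rule measurable_component_singleton)

lemma accS_vec_measurable:
  "m \<le> K \<Longrightarrow> SR \<in> S \<Longrightarrow> accS_vec rS m \<in> borel_measurable (PiM (S \<times> {1..K}) (\<lambda>_. borel))"
  unfolding accS_vec_def
  by (intro borel_measurable_sum borel_measurable_times cap_component_measurable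
      borel_measurable_const) auto

lemma accRD_vec_measurable:
  "n \<le> K \<Longrightarrow> l \<le> n \<Longrightarrow> SD \<in> S \<Longrightarrow> RD \<in> S \<Longrightarrow>
    accRD_vec rS rR l n \<in> borel_measurable (PiM (S \<times> {1..K}) (\<lambda>_. borel))"
  unfolding accRD_vec_def
  by (intro borel_measurable_add borel_measurable_sum borel_measurable_times
      cap_component_measurable borel_measurable_const) auto

lemma (in prob_space) integral_if_event:
  assumes "{w\<in>space M. P w} \<in> events"
  shows "integrable M (\<lambda>w. if P w then c else 0 :: real)"
    and "(\<integral>w. (if P w then c else 0) \<partial>M) = c * prob {w\<in>space M. P w}"
proof -
  let ?E = "{w\<in>space M. P w}"
  have eq: "(if P w then c else 0) = c * indicator ?E w" if "w \<in> space M" for w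
    using that by (auto simp: indicator_def)
  have "integrable M (\<lambda>w. c * indicator ?E w)"
    using assms emeasure_finite
    by (intro integrable_mult_right integrable_real_indicator) (auto simp: less_top[symmetric])
  then show "integrable M (\<lambda>w. if P w then c else 0 :: real)"
    by (rule Bochner_Integration.integrable_cong[THEN iffD1, OF refl, rotated]) (simp add: eq)
  have "(\<integral>w. (if P w then c else 0) \<partial>M) = (\<integral>w. c * indicator ?E w \<partial>M)"
    by (rule Bochner_Integration.integral_cong) (simp_all add: eq)
  then show "(\<integral>w. (if P w then c else 0) \<partial>M) = c * prob ?E"
    by (simp add: Int_absorb2)
qed

locale harq_channel = prob_space +
  fixes g :: "link \<Rightarrow> nat \<Rightarrow> 'a \<Rightarrow> real" and K :: nat
    and rS :: "nat \<Rightarrow> real" and rR :: "nat \<Rightarrow> nat \<Rightarrow> real"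
  assumes indep: "indep_vars (\<lambda>_. borel) (\<lambda>(a, k). g a k) (UNIV \<times> {1..K})"
    and snr_nonneg: "\<And>a k w. k \<in> {1..K} \<Longrightarrow> w \<in> space M \<Longrightarrow> 0 \<le> g a k w"
    and K_pos: "1 \<le> K"
    and rS_nonneg: "\<And>k. k \<in> {1..K} \<Longrightarrow> 0 \<le> rS k"
    and rR_nonneg: "\<And>l k. 1 \<le> l \<Longrightarrow> l < k \<Longrightarrow> k \<le> K \<Longrightarrow> 0 \<le> rR l k"
begin

abbreviation accR :: "'a \<Rightarrow> nat \<Rightarrow> real" where "accR w \<equiv> accS rS (caps g w SR)"
abbreviation accD :: "'a \<Rightarrow> nat \<Rightarrow> real" where "accD w \<equiv> accS rS (caps g w SD)"
abbreviation accDR :: "'a \<Rightarrow> nat \<Rightarrow> nat \<Rightarrow> real" where "accDR w \<equiv> accRD rS rR (caps g w)"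

lemma harq_realisation_caps: "w \<in> space M \<Longrightarrow> harq_realisation K rS rR (caps g w)"
  by unfold_locales (auto simp: caps_def cap_nonneg snr_nonneg rS_nonneg rR_nonneg)

lemma snr_measurable: "k \<in> {1..K} \<Longrightarrow> g a k \<in> borel_measurable M"
  using indep unfolding indep_vars_def by force

lemma accS_measurable: "m \<le> K \<Longrightarrow> (\<lambda>w. accS rS (caps g w a) m) \<in> borel_measurable M"
  unfolding accS_def caps_def
  by (intro borel_measurable_sum borel_measurable_times measurable_compose[OF _ cap_measurable]
      snr_measurable) auto

lemma accRD_measurable: "n \<le> K \<Longrightarrow> l \<le> n \<Longrightarrow> (\<lambda>w. accDR w l n) \<in> borel_measurable M"
  unfolding accRD_def
  by (intro borel_measurable_add accS_measurable borel_measurable_sum borel_measurable_times)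
     (auto simp: caps_def intro!: measurable_compose[OF _ cap_measurable] snr_measurable)

text \<open>With \<open>t = 0\<close> and \<open>m2 = 0\<close> the SR condition says that R has not decoded after round \<open>m1\<close>;
  with \<open>m1 = i - 1\<close>, \<open>m2 = i\<close> and \<open>t = 1\<close> it says that R first decodes in round \<open>i\<close>.\<close>

lemma prob_accR_window_accDR_mult:
  assumes "m1 \<le> K" "m2 \<le> K" "l \<le> n" "n \<le> K"
  shows "prob {w\<in>space M. (accR w m1 < 1 \<and> t \<le> accR w m2) \<and> accDR w l n < 1}
     = prob {w\<in>space M. accR w m1 < 1 \<and> t \<le> accR w m2} * prob {w\<in>space M. accDR w l n < 1}"
proof -
  define U where "U w = restrict (\<lambda>i. (\<lambda>(a, k). g a k) i w) ({SR} \<times> {1..K})" for w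
  define V where "V w = restrict (\<lambda>i. (\<lambda>(a, k). g a k) i w) ({SD, RD} \<times> {1..K})" for w
  let ?MU = "PiM ({SR} \<times> {1..K}) (\<lambda>_. borel :: real measure)"
  let ?MV = "PiM ({SD, RD} \<times> {1..K}) (\<lambda>_. borel :: real measure)"
  let ?X = "{x\<in>space ?MU. accS_vec rS m1 x < 1 \<and> t \<le> accS_vec rS m2 x}"
  let ?Y = "{y\<in>space ?MV. accRD_vec rS rR l n y < 1}"
  have UV: "indep_var ?MU U ?MV V"
    unfolding U_def V_def by (rule indep_var_restrict[OF indep]) auto
  then have U: "U \<in> measurable M ?MU" and V: "V \<in> measurable M ?MV"
    using indep_var_rv1 indep_var_rv2 by blast+
  have "?X \<in> sets ?MU"
    using accS_vec_measurable[of m1 K "{SR}" rS] accS_vec_measurable[of m2 K "{SR}" rS] assms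
    by measurable
  moreover have "?Y \<in> sets ?MV"
    using accRD_vec_measurable[of n K l "{SD,RD}" rS rR] assms by measurable
  ultimately have "prob ((\<lambda>x. (U x, V x)) -` (?X \<times> ?Y) \<inter> space M)
      = prob (U -` ?X \<inter> space M) * prob (V -` ?Y \<inter> space M)"
    by (rule indep_varD[OF UV])
  moreover have accR_U: "accR w m = accS_vec rS m (U w)" if "m \<le> K" for w m
    using that unfolding accS_def accS_vec_def caps_def U_def by (intro sum.cong) auto
  moreover have accDR_V: "accDR w l n = accRD_vec rS rR l n (V w)" for w
    using assms unfolding accRD_def accS_def accRD_vec_def caps_def V_def
    by (intro arg_cong2[where f = "(+)"] sum.cong) auto
  moreover have "(\<lambda>x. (U x, V x)) -` (?X \<times> ?Y) \<inter> space M
      = {w\<in>space M. (accR w m1 < 1 \<and> t \<le> accR w m2) \<and> accDR w l n < 1}"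
    using U V assms by (auto simp: accR_U accDR_V measurable_space)
  moreover have "U -` ?X \<inter> space M = {w\<in>space M. accR w m1 < 1 \<and> t \<le> accR w m2}"
    using U assms by (auto simp: accR_U measurable_space)
  moreover have "V -` ?Y \<inter> space M = {w\<in>space M. accDR w l n < 1}"
    using V by (auto simp: accDR_V measurable_space)
  ultimately show ?thesis by simp
qed

lemma sets_accR_lt: "m \<le> K \<Longrightarrow> {w\<in>space M. accR w m < t} \<in> events"
  using accS_measurable[of m SR] by measurable

lemma sets_accR_window_accDR:
  "m1 \<le> K \<Longrightarrow> m2 \<le> K \<Longrightarrow> l \<le> n \<Longrightarrow> n \<le> K \<Longrightarrow>
    {w\<in>space M. (accR w m1 < 1 \<and> t \<le> accR w m2) \<and> accDR w l n < 1} \<in> events"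
  using accS_measurable[of m1 SR] accS_measurable[of m2 SR] accRD_measurable[of n l]
  by measurable

lemma prob_relay_decodes_in_round:
  assumes "1 \<le> i" "i \<le> K"
  shows "prob {w\<in>space M. accR w (i - 1) < 1 \<and> 1 \<le> accR w i} = pSR M g rS (i - 1) - pSR M g rS i"
proof -
  have "{w\<in>space M. accR w (i - 1) < 1 \<and> 1 \<le> accR w i}
     = {w\<in>space M. accR w (i - 1) < 1} - {w\<in>space M. accR w i < 1}"
    by auto
  moreover have "{w\<in>space M. accR w i < 1} \<subseteq> {w\<in>space M. accR w (i - 1) < 1}"
    using harq_realisation.accS_less_mono[OF harq_realisation_caps, of _ SR i 1 "i - 1"] assms by auto
  ultimately show ?thesis
    unfolding pSR_def using assms by (simp add: finite_measure_Diff sets_accR_lt)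
qed

lemma S_tx_event:
  "{w\<in>space M. S_tx K rS (caps g w) k} = (if k \<in> {1..K}
     then {w\<in>space M. accR w (k - 1) < 1 \<and> accD w (k - 1) < 1}
     else {})"
  by (auto simp: harq_realisation.S_tx_iff[OF harq_realisation_caps])

lemma R_tx_event:
  "{w\<in>space M. R_tx K rS rR (caps g w) l k} = (if 1 \<le> l \<and> l < k \<and> k \<le> K
     then {w\<in>space M. (accR w (l - 1) < 1 \<and> 1 \<le> accR w l) \<and> accDR w l (k - 1) < 1}
     else {})"
  by (auto simp: harq_realisation.R_tx_iff[OF harq_realisation_caps])

lemma sets_S_tx: "{w\<in>space M. S_tx K rS (caps g w) k} \<in> events"
proof (cases "k \<in> {1..K}")
  case True
  then show ?thesis
    using sets_accR_window_accDR[of "k - 1" 0 "k - 1" "k - 1" 0]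
    unfolding S_tx_event if_P[OF True] by auto
qed (auto simp: S_tx_event)

lemma sets_R_tx: "{w\<in>space M. R_tx K rS rR (caps g w) l k} \<in> events"
proof (cases "1 \<le> l \<and> l < k \<and> k \<le> K")
  case True
  then show ?thesis
    unfolding R_tx_event if_P[OF True] by (intro sets_accR_window_accDR) auto
qed (auto simp: R_tx_event)

lemma prob_S_tx:
  "prob {w\<in>space M. S_tx K rS (caps g w) k}
     = (if k \<in> {1..K} then pSD M g rS (k - 1) * pSR M g rS (k - 1) else 0)"
proof (cases "k \<in> {1..K}")
  case True
  then have "prob {w\<in>space M. S_tx K rS (caps g w) k}
      = prob {w\<in>space M. accR w (k - 1) < 1} * prob {w\<in>space M. accD w (k - 1) < 1}"
    using prob_accR_window_accDR_mult[of "k - 1" 0 "k - 1" "k - 1" 0]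
    unfolding S_tx_event if_P[OF True] by auto
  then show ?thesis
    using True by (simp add: pSD_def pSR_def)
qed (auto simp: S_tx_event)

lemma prob_R_tx:
  "prob {w\<in>space M. R_tx K rS rR (caps g w) l k} = (if 1 \<le> l \<and> l < k \<and> k \<le> K
     then (pSR M g rS (l - 1) - pSR M g rS l) * pSRD M g rS rR l (k - 1) else 0)"
proof (cases "1 \<le> l \<and> l < k \<and> k \<le> K")
  case True
  then have "prob {w\<in>space M. R_tx K rS rR (caps g w) l k}
      = prob {w\<in>space M. accR w (l - 1) < 1 \<and> 1 \<le> accR w l}
        * prob {w\<in>space M. accDR w l (k - 1) < 1}"
    unfolding R_tx_event if_P[OF True] by (intro prob_accR_window_accDR_mult) auto
  then show ?thesis
    using True prob_relay_decodes_in_round[of l] by (simp add: pSRD_def)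
qed (auto simp: R_tx_event)

lemma outage_event:
  "{w\<in>space M. \<not> success K rS rR (caps g w)} =
     {w\<in>space M. accR w (K - 1) < 1 \<and> accD w K < 1} \<union>
     (\<Union>i\<in>{1..K - 1}. {w\<in>space M. (accR w (i - 1) < 1 \<and> 1 \<le> accR w i) \<and> accDR w i K < 1})"
  using harq_realisation.not_success_iff[OF harq_realisation_caps K_pos] by auto

lemma P_out_eq:
  "P_out M g K rS rR = pSD M g rS K * pSR M g rS (K - 1)
     + (\<Sum>i=1..K - 1. (pSR M g rS (i - 1) - pSR M g rS i) * pSRD M g rS rR i K)"
proof -
  define direct where "direct = {w\<in>space M. accR w (K - 1) < 1 \<and> accD w K < 1}"
  define relayed where
    "relayed i = {w\<in>space M. (accR w (i - 1) < 1 \<and> 1 \<le> accR w i) \<and> accDR w i K < 1}" for i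
  have direct_sets: "direct \<in> events"
    unfolding direct_def using sets_accR_window_accDR[of "K - 1" 0 K K 0] by simp
  have relayed_sets: "relayed i \<in> events" if "i \<le> K" for i
    unfolding relayed_def using sets_accR_window_accDR[of "i - 1" i i K] that by simp
  have accR_mono: "accR w m \<le> accR w n" if "w \<in> space M" "m \<le> n" "n \<le> K" for w m n
    using harq_realisation.accS_mono[OF harq_realisation_caps] that by blast
  have disjoint: "disjoint_family_on relayed {1..K - 1}"
    unfolding disjoint_family_on_def relayed_def
    using harq_realisation.accR_crossing_unique[OF harq_realisation_caps] by fastforce
  have "direct \<inter> (\<Union>i\<in>{1..K - 1}. relayed i) = {}"
    unfolding direct_def relayed_def using accR_mono[of _ _ "K - 1"] by (fastforce simp: not_less)
  then have "P_out M g K rS rR = prob direct + prob (\<Union>i\<in>{1..K - 1}. relayed i)"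
    unfolding P_out_def outage_event direct_def[symmetric] relayed_def[symmetric]
    using direct_sets relayed_sets by (intro finite_measure_Union sets.finite_UN) auto
  also have "prob (\<Union>i\<in>{1..K - 1}. relayed i) = (\<Sum>i=1..K - 1. prob (relayed i))"
    using disjoint relayed_sets by (intro finite_measure_finite_Union) auto
  finally have "P_out M g K rS rR = prob direct + (\<Sum>i=1..K - 1. prob (relayed i))" .
  moreover have "prob direct = pSD M g rS K * pSR M g rS (K - 1)"
    using prob_accR_window_accDR_mult[of "K - 1" 0 K K 0] by (simp add: direct_def pSD_def pSR_def)
  moreover have "prob (relayed i) = (pSR M g rS (i - 1) - pSR M g rS i) * pSRD M g rS rR i K"
    if "i \<in> {1..K - 1}" for i
    using that prob_accR_window_accDR_mult[of "i - 1" i i K 1] prob_relay_decodes_in_round[of i]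
    by (auto simp: relayed_def pSRD_def)
  ultimately show ?thesis by simp
qed

lemma N_s_bar_eq_sum:
  "N_s_bar M g Nb K rS rR = real Nb *
     ((\<Sum>k=1..K. rS k * prob {w\<in>space M. S_tx K rS (caps g w) k}) +
      (\<Sum>l=1..K. \<Sum>k=1..K. rR l k * prob {w\<in>space M. R_tx K rS rR (caps g w) l k}))"
proof -
  define uS where "uS k w = (if S_tx K rS (caps g w) k then rS k else 0)" for k w
  define uR where "uR l k w = (if R_tx K rS rR (caps g w) l k then rR l k else 0)" for l k w
  have uS: "integrable M (uS k)" "integral\<^sup>L M (uS k) = rS k * prob {w\<in>space M. S_tx K rS (caps g w) k}"
    for k
    unfolding uS_def using integral_if_event[OF sets_S_tx] by auto
  have uR: "integrable M (uR l k)"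
    "integral\<^sup>L M (uR l k) = rR l k * prob {w\<in>space M. R_tx K rS rR (caps g w) l k}" for l k
    unfolding uR_def using integral_if_event[OF sets_R_tx] by auto
  have "N_s_bar M g Nb K rS rR
      = real Nb * (\<integral>w. (\<Sum>k=1..K. uS k w) + (\<Sum>l=1..K. \<Sum>k=1..K. uR l k w) \<partial>M)"
    by (simp add: N_s_bar_def chan_uses_def uS_def uR_def)
  also have "\<dots> = real Nb * ((\<Sum>k=1..K. integral\<^sup>L M (uS k)) + (\<Sum>l=1..K. \<Sum>k=1..K. integral\<^sup>L M (uR l k)))"
    using uS uR by (simp add: Bochner_Integration.integral_add Bochner_Integration.integral_sum
        integrable_sum)
  finally show ?thesis
    by (simp add: uS uR)
qed

lemma source_uses_eq:
  "(\<Sum>k=1..K. rS k * prob {w\<in>space M. S_tx K rS (caps g w) k})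
     = (\<Sum>i=1..K. rS i * pSD M g rS (i - 1) * pSR M g rS (i - 1))"
  by (rule sum.cong) (simp_all add: prob_S_tx)

lemma relay_uses_eq:
  "(\<Sum>l=1..K. \<Sum>k=1..K. rR l k * prob {w\<in>space M. R_tx K rS rR (caps g w) l k})
     = (\<Sum>i=1..K - 1. (pSR M g rS (i - 1) - pSR M g rS i) *
          ((\<Sum>l=i+2..K. rR i l * pSRD M g rS rR i (l - 1)) + rR i (i + 1) * pSD M g rS i))"
proof -
  let ?u = "\<lambda>l k. rR l k * prob {w\<in>space M. R_tx K rS rR (caps g w) l k}"
  have row: "(\<Sum>k=1..K. ?u i k) = (pSR M g rS (i - 1) - pSR M g rS i) *
      ((\<Sum>l=i+2..K. rR i l * pSRD M g rS rR i (l - 1)) + rR i (i + 1) * pSD M g rS i)"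
    if i: "i \<in> {1..K - 1}" for i
  proof -
    have "(\<Sum>k=1..K. ?u i k) = (\<Sum>k=Suc i..K. ?u i k)"
      by (rule sum.mono_neutral_right) (use i in \<open>auto simp: prob_R_tx\<close>)
    also have "\<dots> = ?u i (Suc i) + (\<Sum>k=i+2..K. ?u i k)"
      using i by (subst sum.atLeast_Suc_atMost) auto
    also have "\<dots> = (pSR M g rS (i - 1) - pSR M g rS i) *
        (rR i (i + 1) * pSD M g rS i + (\<Sum>k=i+2..K. rR i k * pSRD M g rS rR i (k - 1)))"
      using i by (auto simp: prob_R_tx sum_distrib_left algebra_simps)
    finally show ?thesis by (simp add: add.commute)
  qed
  have "(\<Sum>l=1..K. \<Sum>k=1..K. ?u l k) = (\<Sum>l=1..K - 1. \<Sum>k=1..K. ?u l k)"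
    by (rule sum.mono_neutral_right) (auto intro!: sum.neutral simp: prob_R_tx)
  then show ?thesis
    using row by simp
qed

end

theorem proposition1:
  fixes M :: "'a measure" and g :: "link \<Rightarrow> nat \<Rightarrow> 'a \<Rightarrow> real"
    and Nb K :: nat and rS :: "nat \<Rightarrow> real" and rR :: "nat \<Rightarrow> nat \<Rightarrow> real"
  assumes "prob_space M"
    and "prob_space.indep_vars M (\<lambda>_. borel) (\<lambda>(a, k). g a k) (UNIV \<times> {1..K})"
    and "\<forall>a. \<forall>k\<in>{1..K}. distr M borel (g a k) = distr M borel (g a 1)"
    and "\<forall>a. \<forall>k\<in>{1..K}. \<forall>x. measure M {w\<in>space M. g a k w = x} = 0"
    and "\<forall>a. \<forall>k\<in>{1..K}. \<forall>w\<in>space M. 0 \<le> g a k w"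
    and "K \<ge> 1" and "Nb > 0"
    and "\<forall>k\<in>{1..K}. 0 \<le> rS k"
    and "\<forall>l k. 1 \<le> l \<and> l < k \<and> k \<le> K \<longrightarrow> 0 \<le> rR l k"
  defines "D \<equiv> (\<Sum>i=1..K. rS i * pSD M g rS (i - 1) * pSR M g rS (i - 1))
      + (\<Sum>i=1..K-1. (pSR M g rS (i - 1) - pSR M g rS i) *
           ((\<Sum>l=i+2..K. rR i l * pSRD M g rS rR i (l - 1)) + rR i (i + 1) * pSD M g rS i))"
  shows "P_out M g K rS rR = pSD M g rS K * pSR M g rS (K - 1)
           + (\<Sum>i=1..K-1. (pSR M g rS (i - 1) - pSR M g rS i) * pSRD M g rS rR i K)
       \<and> N_s_bar M g Nb K rS rR = real Nb * D
       \<and> throughput M g Nb K rS rR = (1 - P_out M g K rS rR) / D"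
proof -
  interpret harq_channel M g K rS rR
    using assms(1,2,5,6,8,9)
    by (intro harq_channel.intro harq_channel_axioms.intro) auto
  have N: "N_s_bar M g Nb K rS rR = real Nb * D"
    unfolding D_def N_s_bar_eq_sum source_uses_eq relay_uses_eq ..
  moreover have "throughput M g Nb K rS rR = (1 - P_out M g K rS rR) / D"
    unfolding throughput_def N using \<open>Nb > 0\<close> by simp
  ultimately show ?thesis
    using P_out_eq by blast
qed

end
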